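(* Let $G$ be a finite simple graph, $s\geq1$, and $e_1,\dots,e_s$ edges of $G$ (repetitions allowed). Every minimal monomial generator of $(I(G)^{s+1}:e_1\cdots e_s)$ is of the form $uv$ for vertices $u,v$ (possibly $u=v$) such that either $uv$ is an edge of $G$ or $u$ and $v$ are even-connected with respect to $e_1\cdots e_s$.
   Context: $S=K[\,x : x\in V(G)\,]$, $I(G)=(xy : xy\text{ an edge of } G)$, edges identified with degree-2 monomials, $(J:m)=\{f\in S : fm\in J\}$. Even-connection: vertices $u,v$ (possibly equal) are even-connected with respect to $e_1,\dots,e_s$ if there is a sequence of vertices $p_0,\dots,p_{2k+1}$, $k\ge1$ (vertices may repeat), with (1) $p_0=u$, $p_{2k+1}=v$; (2) for all $0\le l\le k-1$, $p_{2l+1}p_{2l+2}=e_i$ for some $i$; (3) for every $i$, $|\{l\ge0: p_{2l+1}p_{2l+2}=e_i\}|\le|\{j: e_j=e_i\}|$; (4) for all $0\le r\le 2k$, $p_rp_{r+1}$ is an edge of $G$. *)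

theory Defs
  imports "HOL-Library.Poly_Mapping"
begin

text \<open>Polynomial ring S = K[x_v : v a vertex]: polynomials as finitely supported maps
  from exponent vectors (monomials) to coefficients.\<close>

type_synonym ('v, 'k) mpoly = "('v \<Rightarrow>\<^sub>0 nat) \<Rightarrow>\<^sub>0 'k"

definition mon :: "('v \<Rightarrow>\<^sub>0 nat) \<Rightarrow> ('v, 'k::comm_ring_1) mpoly" where
  "mon a = Poly_Mapping.single a 1"

definition var :: "'v \<Rightarrow> ('v, 'k::comm_ring_1) mpoly" where
  "var x = mon (Poly_Mapping.single x 1)"

definition ideal_gen :: "('a::comm_ring_1) set \<Rightarrow> 'a set" where
  "ideal_gen A = {f. \<exists>B c. finite B \<and> B \<subseteq> A \<and> f = (\<Sum>b\<in>B. c b * b)}"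

definition ideal_pow :: "('a::comm_ring_1) set \<Rightarrow> nat \<Rightarrow> 'a set" where
  "ideal_pow I n = ideal_gen {prod_list fs | fs. length fs = n \<and> set fs \<subseteq> I}"

definition colon :: "('a::comm_ring_1) set \<Rightarrow> 'a \<Rightarrow> 'a set" where
  "colon J m = {f. f * m \<in> J}"

definition edge_ideal :: "('v \<Rightarrow> 'v \<Rightarrow> bool) \<Rightarrow> ('v, 'k::comm_ring_1) mpoly set" where
  "edge_ideal E = ideal_gen {var x * var y | x y. E x y}"

definition min_mon_gens :: "('v, 'k::comm_ring_1) mpoly set \<Rightarrow> ('v \<Rightarrow>\<^sub>0 nat) set" where
  "min_mon_gens J = {a. mon a \<in> J \<and>
      (\<forall>b. (mon b :: ('v,'k) mpoly) dvd mon a \<and> mon b \<in> J \<longrightarrow> b = a)}"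

text \<open>Even-connection of u and v with respect to the edges es ! 0, ..., es ! (s-1)
  (edges given as vertex pairs, compared as unordered pairs).\<close>
definition even_connected ::
  "('v \<Rightarrow> 'v \<Rightarrow> bool) \<Rightarrow> ('v \<times> 'v) list \<Rightarrow> 'v \<Rightarrow> 'v \<Rightarrow> bool" where
  "even_connected E es u v \<longleftrightarrow>
     (\<exists>(p :: nat \<Rightarrow> 'v) (k :: nat). k \<ge> 1 \<and> p 0 = u \<and> p (2*k+1) = v \<and>
        (\<forall>l<k. \<exists>i<length es. {p (2*l+1), p (2*l+2)} = {fst (es!i), snd (es!i)}) \<and>
        (\<forall>i<length es.
           card {l. l < k \<and> {p (2*l+1), p (2*l+2)} = {fst (es!i), snd (es!i)}}
           \<le> card {j. j < length es \<and> {fst (es!j), snd (es!j)} = {fst (es!i), snd (es!i)}}) \<and>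
        (\<forall>r\<le>2*k. E (p r) (p (r+1))))"

end

theory Submission
  imports Defs "HOL-Library.Multiset"
begin

(*
  Suppose x^a e_1 ... e_s lies in I^{s+1}. Every term of every element of I^{s+1} is divisible by
  a product of s+1 edges, so x^a e_1 ... e_s is divisible by f_1 ... f_{s+1} with f_j edges.
  Regard the f_j as s+1 walks of length one whose endpoints form a submultiset of a + e_1 + ... + e_s.
  Now remove the e_i = pq one at a time: if p or q is not used as an endpoint, some walk can be
  discarded; otherwise a walk ending in p and a walk starting in q are glued along pq. This keeps
  one more walk than remaining edges, so in the end a walk from u to v with both ends in a remains.
  The edges of this walk other than the glued e_i are s+1 edges whose product is uv times those
  e_i, hence uv lies in the colon ideal; minimality of x^a forces x^a = uv, and the walk shows that u and v are
  adjacent or even-connected.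
*)

section \<open>Monomials as multisets of variables\<close>

definition pm_of_mset :: "'v multiset \<Rightarrow> 'v \<Rightarrow>\<^sub>0 nat" where
  "pm_of_mset N = (\<Sum>v\<in>#N. Poly_Mapping.single v 1)"

definition mset_of_pm :: "('v \<Rightarrow>\<^sub>0 nat) \<Rightarrow> 'v multiset" where
  "mset_of_pm c = (\<Sum>v\<in>Poly_Mapping.keys c. replicate_mset (Poly_Mapping.lookup c v) v)"

lemma lookup_pm_of_mset [simp]: "Poly_Mapping.lookup (pm_of_mset N) v = count N v"
  by (induction N) (auto simp: pm_of_mset_def lookup_add lookup_single)

lemma pm_of_mset_add [simp]: "pm_of_mset (M + N) = pm_of_mset M + pm_of_mset N"
  by (simp add: pm_of_mset_def)

lemma count_mset_of_pm [simp]: "count (mset_of_pm c) v = Poly_Mapping.lookup c v"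
proof -
  have "count (mset_of_pm c) v = (\<Sum>w\<in>Poly_Mapping.keys c. if w = v then Poly_Mapping.lookup c v else 0)"
    unfolding mset_of_pm_def count_sum by (intro sum.cong) auto
  then show ?thesis
    by (simp add: in_keys_iff)
qed

lemma mset_of_pm_add [simp]: "mset_of_pm (c + d) = mset_of_pm c + mset_of_pm d"
  by (simp add: multiset_eq_iff lookup_add)

lemma mset_of_pm_of_mset [simp]: "mset_of_pm (pm_of_mset N) = N"
  by (simp add: multiset_eq_iff)

lemma pm_of_mset_of_pm [simp]: "pm_of_mset (mset_of_pm c) = c"
  by (rule poly_mapping_eqI) simp

lemma mon_add: "(mon (a + b) :: ('v, 'k::comm_ring_1) mpoly) = mon a * mon b"
  by (simp add: mon_def mult_single)

lemma mon_dvd_mon: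
  assumes "N \<subseteq># mset_of_pm c"
  shows "(mon (pm_of_mset N) :: ('v, 'k::comm_ring_1) mpoly) dvd mon c"
proof -
  have "c = pm_of_mset N + pm_of_mset (mset_of_pm c - N)"
    using assms by (metis pm_of_mset_add pm_of_mset_of_pm subset_mset.add_diff_inverse)
  then show ?thesis
    by (metis mon_add dvd_triv_left)
qed

definition edge_vertices :: "('v \<times> 'v) multiset \<Rightarrow> 'v multiset" where
  "edge_vertices L = (\<Sum>e\<in>#L. {#fst e, snd e#})"

lemma edge_vertices_simps [simp]:
  "edge_vertices {#} = {#}"
  "edge_vertices (add_mset e L) = add_mset (fst e) (add_mset (snd e) (edge_vertices L))"
  "edge_vertices (L + K) = edge_vertices L + edge_vertices K"
  by (simp_all add: edge_vertices_def)

lemma prod_edge_monomials: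
  "(\<Prod>e\<in>#L. var (fst e) * var (snd e) :: ('v, 'k::comm_ring_1) mpoly) = mon (pm_of_mset (edge_vertices L))"
proof (induction L)
  case empty
  then show ?case by (simp add: mon_def pm_of_mset_def)
next
  case (add e L)
  then show ?case
    by (simp add: var_def pm_of_mset_def mon_add[symmetric] ac_simps)
qed

section \<open>Supports of powers of the edge ideal\<close>

lemma ideal_gen_base: "x \<in> A \<Longrightarrow> x \<in> ideal_gen A"
  unfolding ideal_gen_def by (intro CollectI exI[of _ "{x}"] exI[of _ "\<lambda>_. 1"]) simp

lemma keys_ideal_gen_subset:
  assumes "f \<in> ideal_gen A"
    and "\<And>g. g \<in> A \<Longrightarrow> Poly_Mapping.keys g \<subseteq> S"
    and "\<And>c d. c \<in> S \<Longrightarrow> d + c \<in> S"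
  shows "Poly_Mapping.keys (f :: ('v, 'k::comm_ring_1) mpoly) \<subseteq> S"
proof -
  obtain B h where B: "B \<subseteq> A" and f: "f = (\<Sum>b\<in>B. h b * b)"
    using assms(1) unfolding ideal_gen_def by blast
  have "Poly_Mapping.keys (h b * b) \<subseteq> S" if "b \<in> B" for b
    using keys_mult[of "h b" b] assms(2)[of b] assms(3) B that by fastforce
  then show ?thesis
    unfolding f using keys_sum by fast
qed

definition edge_product_multiples :: "('v \<Rightarrow> 'v \<Rightarrow> bool) \<Rightarrow> nat \<Rightarrow> ('v \<Rightarrow>\<^sub>0 nat) set" where
  "edge_product_multiples E n = {c. \<exists>L. size L = n \<and> (\<forall>e\<in>#L. E (fst e) (snd e)) \<and>
      edge_vertices L \<subseteq># mset_of_pm c}"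

lemma edge_product_multiples_0: "c \<in> edge_product_multiples E 0"
  unfolding edge_product_multiples_def by auto

lemma edge_product_multiples_add:
  assumes "c \<in> edge_product_multiples E n" "d \<in> edge_product_multiples E m"
  shows "c + d \<in> edge_product_multiples E (n + m)"
proof -
  obtain L K where "size L = n" "\<forall>e\<in>#L. E (fst e) (snd e)" "edge_vertices L \<subseteq># mset_of_pm c"
    "size K = m" "\<forall>e\<in>#K. E (fst e) (snd e)" "edge_vertices K \<subseteq># mset_of_pm d"
    using assms unfolding edge_product_multiples_def by blast
  then show ?thesis
    unfolding edge_product_multiples_def
    by (intro CollectI exI[of _ "L + K"]) (auto intro: subset_mset.add_mono)
qed

lemma edge_product_multiples_upward:
  "c \<in> edge_product_multiples E n \<Longrightarrow> d + c \<in> edge_product_multiples E n"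
  using edge_product_multiples_add[OF edge_product_multiples_0] by fastforce

lemma keys_edge_ideal:
  assumes "f \<in> edge_ideal E"
  shows "Poly_Mapping.keys (f :: ('v, 'k::comm_ring_1) mpoly) \<subseteq> edge_product_multiples E 1"
  using assms unfolding edge_ideal_def
proof (rule keys_ideal_gen_subset)
  fix g :: "('v, 'k) mpoly" assume "g \<in> {var x * var y |x y. E x y}"
  then obtain x y where "E x y" "g = var x * var y" by blast
  then show "Poly_Mapping.keys g \<subseteq> edge_product_multiples E 1"
    using prod_edge_monomials[of "{#(x, y)#}", where 'k='k]
    by (auto simp: edge_product_multiples_def mon_def intro!: exI[of _ "{#(x, y)#}"])
qed (rule edge_product_multiples_upward)

lemma keys_prod_list_edge_ideal:
  assumes "set fs \<subseteq> edge_ideal E"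
  shows "Poly_Mapping.keys (prod_list fs :: ('v, 'k::comm_ring_1) mpoly)
           \<subseteq> edge_product_multiples E (length fs)"
  using assms
proof (induction fs)
  case Nil
  then show ?case by (simp add: edge_product_multiples_0)
next
  case (Cons f fs)
  then have "Poly_Mapping.keys f \<subseteq> edge_product_multiples E 1"
    and "Poly_Mapping.keys (prod_list fs) \<subseteq> edge_product_multiples E (length fs)"
    using keys_edge_ideal by auto
  then show ?case
    using keys_mult[of f "prod_list fs"] edge_product_multiples_add by fastforce
qed

lemma mon_in_edge_ideal_pow:
  assumes "(mon c :: ('v, 'k::comm_ring_1) mpoly) \<in> ideal_pow (edge_ideal E) n"
  shows "\<exists>L. size L = n \<and> (\<forall>e\<in>#L. E (fst e) (snd e)) \<and> edge_vertices L \<subseteq># mset_of_pm c"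
proof -
  have "Poly_Mapping.keys (mon c :: ('v, 'k) mpoly) \<subseteq> edge_product_multiples E n"
    using assms unfolding ideal_pow_def
  proof (rule keys_ideal_gen_subset)
    show "Poly_Mapping.keys g \<subseteq> edge_product_multiples E n"
      if "g \<in> {prod_list fs |fs. length fs = n \<and> set fs \<subseteq> edge_ideal E}" for g :: "('v, 'k) mpoly"
      using that keys_prod_list_edge_ideal by blast
  qed (rule edge_product_multiples_upward)
  then show ?thesis
    by (simp add: mon_def edge_product_multiples_def)
qed

lemma edge_product_in_ideal_pow:
  assumes "\<forall>e\<in>#N. E (fst e) (snd e)"
  shows "(mon (pm_of_mset (edge_vertices N)) :: ('v, 'k::comm_ring_1) mpoly)
           \<in> ideal_pow (edge_ideal E) (size N)"
proof -
  obtain xs where xs: "mset xs = N"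
    using ex_mset by blast
  let ?fs = "map (\<lambda>e. var (fst e) * var (snd e)) xs :: ('v, 'k) mpoly list"
  have "set ?fs \<subseteq> edge_ideal E"
    using assms xs unfolding edge_ideal_def by (force intro: ideal_gen_base)
  moreover have "prod_list ?fs = mon (pm_of_mset (edge_vertices N))"
    using xs by (simp flip: prod_mset_prod_list add: prod_edge_monomials)
  moreover have "length ?fs = size N"
    using xs by auto
  ultimately show ?thesis
    unfolding ideal_pow_def by (intro ideal_gen_base CollectI exI[of _ ?fs]) simp
qed

lemma mon_in_colon_edges_iff:
  "(mon c \<in> colon J (\<Prod>e\<leftarrow>es. var (fst e) * var (snd e)))
     \<longleftrightarrow> (mon (c + pm_of_mset (edge_vertices (mset es))) :: ('v, 'k::comm_ring_1) mpoly) \<in> J"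
proof -
  have "(\<Prod>e\<leftarrow>es. var (fst e) * var (snd e)) = (mon (pm_of_mset (edge_vertices (mset es))) :: ('v, 'k) mpoly)"
    by (simp flip: prod_mset_prod_list add: prod_edge_monomials)
  then show ?thesis
    by (simp add: colon_def mon_add)
qed

section \<open>Odd walks\<close>

text \<open>\<open>odd_walk E x y M\<close>: some walk \<open>x = p 0, p 1, \<dots>, p (2*k+1) = y\<close> in \<open>E\<close> has
  \<open>M\<close> as the multiset of its edges \<open>{p (2*l+1), p (2*l+2)}\<close> (see \<open>odd_walk_path\<close>).\<close>

inductive odd_walk :: "('v \<Rightarrow> 'v \<Rightarrow> bool) \<Rightarrow> 'v \<Rightarrow> 'v \<Rightarrow> 'v set multiset \<Rightarrow> bool" for E where
  edge: "E x y \<Longrightarrow> odd_walk E x y {#}"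
| join: "odd_walk E x p M1 \<Longrightarrow> odd_walk E q y M2 \<Longrightarrow> E p q \<Longrightarrow>
    odd_walk E x y (add_mset {p, q} (M1 + M2))"

lemma odd_walk_sym:
  assumes "symp E"
  shows "odd_walk E x y M \<Longrightarrow> odd_walk E y x M"
proof (induction rule: odd_walk.induct)
  case (edge x y)
  from sympD[OF assms this] show ?case by (rule odd_walk.edge)
next
  case (join x p M1 q y M2)
  from odd_walk.join[OF join.IH(2,1) sympD[OF assms join.hyps(3)]] show ?case
    by (simp add: insert_commute add.commute)
qed

lemma mset_map_upt_split:
  "mset (map F [0..<k + Suc m]) =
     mset (map F [0..<k]) + add_mset (F k) (mset (map (\<lambda>l. F (l + Suc k)) [0..<m]))"
proof -
  have "[0..<k + Suc m] = [0..<k] @ [k..<k + Suc m]"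
    by (rule upt_add_eq_append) simp
  also have "[k..<k + Suc m] = k # [Suc k..<m + Suc k]"
    by (simp add: upt_conv_Cons add.commute del: upt_Suc)
  also have "[Suc k..<m + Suc k] = map (\<lambda>l. l + Suc k) [0..<m]"
    by (rule map_add_upt[symmetric])
  finally show ?thesis
    by (simp add: comp_def)
qed

lemma odd_walk_path:
  "odd_walk E x y M \<Longrightarrow> \<exists>p k. p 0 = x \<and> p (2*k+1) = y \<and> (\<forall>r\<le>2*k. E (p r) (p (r+1))) \<and>
     mset (map (\<lambda>l. {p (2*l+1), p (2*l+2)}) [0..<k]) = M"
proof (induction rule: odd_walk.induct)
  case (edge x y)
  then show ?case
    by (intro exI[of _ "\<lambda>r. if r = 0 then x else y"] exI[of _ 0]) auto
next
  case (join x p M1 q y M2)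
  from join.IH(1) obtain p1 k1 where P1: "p1 0 = x" "p1 (2*k1+1) = p" "\<forall>r\<le>2*k1. E (p1 r) (p1 (r+1))"
    "mset (map (\<lambda>l. {p1 (2*l+1), p1 (2*l+2)}) [0..<k1]) = M1" by blast
  from join.IH(2) obtain p2 k2 where P2: "p2 0 = q" "p2 (2*k2+1) = y" "\<forall>r\<le>2*k2. E (p2 r) (p2 (r+1))"
    "mset (map (\<lambda>l. {p2 (2*l+1), p2 (2*l+2)}) [0..<k2]) = M2" by blast
  define P where "P r = (if r \<le> 2*k1+1 then p1 r else p2 (r - (2*k1+2)))" for r
  define k where "k = k1 + Suc k2"
  have "E (P r) (P (r+1))" if "r \<le> 2*k" for r
  proof -
    consider "r < 2*k1+1" | "r = 2*k1+1" | "r > 2*k1+1" by linarith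
    then show ?thesis
    proof cases
      case 1
      then show ?thesis using P1(3) by (simp add: P_def)
    next
      case 2
      then show ?thesis using P1(2) P2(1) join.hyps(3) by (simp add: P_def)
    next
      case 3
      then have "r - (2*k1+2) \<le> 2*k2" "r + 1 - (2*k1+2) = r - (2*k1+2) + 1"
        using that by (auto simp: k_def)
      then show ?thesis using 3 P2(3) by (simp add: P_def)
    qed
  qed
  moreover have "mset (map (\<lambda>l. {P (2*l+1), P (2*l+2)}) [0..<k]) = add_mset {p, q} (M1 + M2)"
  proof -
    have "mset (map (\<lambda>l. {P (2*l+1), P (2*l+2)}) [0..<k1]) = M1"
      unfolding P1(4)[symmetric] by (intro arg_cong[where f=mset] map_cong) (auto simp: P_def)
    moreover have "mset (map (\<lambda>l. {P (2*(l + Suc k1)+1), P (2*(l + Suc k1)+2)}) [0..<k2]) = M2"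
      unfolding P2(4)[symmetric] by (intro arg_cong[where f=mset] map_cong) (auto simp: P_def)
    moreover have "{P (2*k1+1), P (2*k1+2)} = {p, q}"
      using P1(2) P2(1) by (simp add: P_def)
    ultimately show ?thesis
      unfolding k_def mset_map_upt_split by simp
  qed
  moreover have "P 0 = x" "P (2*k+1) = y"
    using P1 P2 by (simp_all add: P_def k_def)
  ultimately show ?case by blast
qed

lemma odd_walk_even_position_edges:
  assumes "irreflp E"
  shows "odd_walk E x y M \<Longrightarrow> \<exists>N. size N = size M + 1 \<and> (\<forall>e\<in>#N. E (fst e) (snd e)) \<and>
     edge_vertices N = {#x, y#} + (\<Sum>S\<in>#M. mset_set S)"
proof (induction rule: odd_walk.induct)
  case (edge x y)
  then show ?case by (intro exI[of _ "{#(x, y)#}"]) auto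
next
  case (join x p M1 q y M2)
  from join.IH obtain N1 N2 where
    "size N1 = size M1 + 1" "\<forall>e\<in>#N1. E (fst e) (snd e)" "edge_vertices N1 = {#x, p#} + (\<Sum>S\<in>#M1. mset_set S)"
    "size N2 = size M2 + 1" "\<forall>e\<in>#N2. E (fst e) (snd e)" "edge_vertices N2 = {#q, y#} + (\<Sum>S\<in>#M2. mset_set S)"
    by blast
  moreover have "p \<noteq> q"
    using join.hyps(3) irreflpD[OF assms] by blast
  ultimately show ?case
    by (intro exI[of _ "N1 + N2"]) (auto simp: ac_simps)
qed

definition edge_set :: "'v \<times> 'v \<Rightarrow> 'v set" where
  "edge_set e = {fst e, snd e}"

lemma card_eq_count_mset_map:
  "card {l. l < k \<and> F l = S} = count (mset (map F [0..<k])) S"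
proof -
  have "count (mset (map F [0..<k])) S = length (filter ((=) S) (map F [0..<k]))"
    by (simp only: count_mset count_list_eq_length_filter)
  also have "\<dots> = card {l. l < k \<and> F l = S}"
    by (subst length_filter_conv_card) (auto intro: arg_cong[where f=card])
  finally show ?thesis ..
qed

lemma odd_walk_even_connected:
  assumes walk: "odd_walk E u v M" and M: "M \<subseteq># image_mset edge_set (mset es)"
  shows "E u v \<or> even_connected E es u v"
proof -
  obtain p k where p: "p 0 = u" "p (2*k+1) = v" "\<forall>r\<le>2*k. E (p r) (p (r+1))"
    and M_eq: "mset (map (\<lambda>l. {p (2*l+1), p (2*l+2)}) [0..<k]) = M"
    using odd_walk_path[OF walk] by blast
  show ?thesis
  proof (cases "k = 0")
    case True
    have "E (p 0) (p (0 + 1))"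
      using p(3) by blast
    then show ?thesis
      using p(1,2) True by simp
  next
    case False
    have "\<exists>i<length es. {p (2*l+1), p (2*l+2)} = {fst (es!i), snd (es!i)}" if "l < k" for l
    proof -
      have "{p (2*l+1), p (2*l+2)} \<in># M"
        using that unfolding M_eq[symmetric] by simp
      then have "{p (2*l+1), p (2*l+2)} \<in># image_mset edge_set (mset es)"
        by (rule mset_subset_eqD[OF M])
      then obtain e where "e \<in> set es" "{p (2*l+1), p (2*l+2)} = edge_set e"
        by auto
      then obtain i where "i < length es" "{p (2*l+1), p (2*l+2)} = edge_set (es ! i)"
        by (metis in_set_conv_nth)
      then show ?thesis
        unfolding edge_set_def by blast
    qed
    moreover have "card {l. l < k \<and> {p (2*l+1), p (2*l+2)} = S}
        \<le> card {j. j < length es \<and> {fst (es!j), snd (es!j)} = S}" for S :: "'a set"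
    proof -
      have "map (\<lambda>j. {fst (es!j), snd (es!j)}) [0..<length es] = map edge_set es"
        by (metis (no_types, lifting) edge_set_def map_eq_conv map_map map_nth comp_apply)
      then show ?thesis
        using mset_subset_eq_count[OF M, of S] M_eq
        by (simp only: card_eq_count_mset_map mset_map)
    qed
    ultimately have "even_connected E es u v"
      unfolding even_connected_def using False p by (intro exI[of _ p] exI[of _ k]) simp
    then show ?thesis ..
  qed
qed

section \<open>Gluing walks along the edges \<open>e\<^sub>i\<close>\<close>

text \<open>A walk is recorded as a triple \<open>(x, y, M)\<close> of its ends and its odd-position edges.\<close>

definition walk_ends :: "('v \<times> 'v \<times> 'v set multiset) multiset \<Rightarrow> 'v multiset" where
  "walk_ends W = (\<Sum>(x, y, M)\<in>#W. {#x, y#})"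

definition walk_odd_edges :: "('v \<times> 'v \<times> 'v set multiset) multiset \<Rightarrow> 'v set multiset" where
  "walk_odd_edges W = (\<Sum>(x, y, M)\<in>#W. M)"

definition odd_walks :: "('v \<Rightarrow> 'v \<Rightarrow> bool) \<Rightarrow> ('v \<times> 'v \<times> 'v set multiset) multiset \<Rightarrow> bool" where
  "odd_walks E W \<longleftrightarrow> (\<forall>(x, y, M)\<in>#W. odd_walk E x y M)"

lemma walk_ends_simps [simp]:
  "walk_ends {#} = {#}"
  "walk_ends (add_mset (x, y, M) W) = add_mset x (add_mset y (walk_ends W))"
  by (simp_all add: walk_ends_def)

lemma walk_odd_edges_simps [simp]:
  "walk_odd_edges {#} = {#}"
  "walk_odd_edges (add_mset (x, y, M) W) = M + walk_odd_edges W"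
  by (simp_all add: walk_odd_edges_def)

lemma odd_walks_simps [simp]:
  "odd_walks E {#}"
  "odd_walks E (add_mset (x, y, M) W) \<longleftrightarrow> odd_walk E x y M \<and> odd_walks E W"
  by (simp_all add: odd_walks_def)

lemma odd_walk_ending_at:
  assumes "symp E" and W: "odd_walks E W" and p: "p \<in># walk_ends W"
  obtains x M W0 where "odd_walk E x p M" "odd_walks E W0" "size W = Suc (size W0)"
    "walk_ends W = add_mset x (add_mset p (walk_ends W0))" "walk_odd_edges W = M + walk_odd_edges W0"
proof -
  obtain a b M where f: "(a, b, M) \<in># W" and "p = a \<or> p = b"
    using p unfolding walk_ends_def by auto
  define W0 where "W0 = W - {#(a, b, M)#}"
  have W_eq: "W = add_mset (a, b, M) W0"
    using f by (simp add: W0_def)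
  with W have walk: "odd_walk E a b M" and W0: "odd_walks E W0"
    by simp_all
  show ?thesis
  proof (cases "p = a")
    case True
    with odd_walk_sym[OF assms(1) walk] show ?thesis
      by (intro that[of b M W0]) (simp_all add: W0 W_eq add_mset_commute)
  next
    case False
    with \<open>p = a \<or> p = b\<close> walk show ?thesis
      by (intro that[of a M W0]) (simp_all add: W0 W_eq)
  qed
qed

lemma add_mset_subseteqD: "add_mset x A \<subseteq># B \<Longrightarrow> A \<subseteq># B"
  by (metis mset_subset_eq_insertD subset_mset.less_imp_le)

lemma subset_add_mset_notin:
  assumes "A \<subseteq># add_mset x B" "x \<notin># A"
  shows "A \<subseteq># B"
  unfolding subseteq_mset_def
proof
  fix a
  show "count A a \<le> count B a"
    using mset_subset_eq_count[OF assms(1), of a] assms(2) by (cases "a = x") (auto simp: not_in_iff)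
qed

lemma odd_walks_drop:
  assumes "symp E" and W: "odd_walks E W" "W \<noteq> {#}"
    and ends: "walk_ends W \<subseteq># add_mset q C"
  obtains W0 where "odd_walks E W0" "size W = Suc (size W0)"
    "walk_odd_edges W0 \<subseteq># walk_odd_edges W" "walk_ends W0 \<subseteq># C"
proof (cases "q \<in># walk_ends W")
  case True
  with assms(1) W(1) obtain x M W0 where W0: "odd_walks E W0" "size W = Suc (size W0)"
    "walk_ends W = add_mset x (add_mset q (walk_ends W0))" "walk_odd_edges W = M + walk_odd_edges W0"
    by (rule odd_walk_ending_at)
  from ends have "add_mset x (walk_ends W0) \<subseteq># C"
    unfolding W0(3) add_mset_commute[of x q] by simp
  then have "walk_ends W0 \<subseteq># C"
    by (rule add_mset_subseteqD)
  with W0 show ?thesis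
    by (intro that) simp_all
next
  case False
  obtain x y M W0 where W_eq: "W = add_mset (x, y, M) W0"
    using W(2) by (metis multiset_cases prod_cases3)
  from ends False have "walk_ends W \<subseteq># C"
    by (rule subset_add_mset_notin)
  then have "walk_ends W0 \<subseteq># C"
    unfolding W_eq by (auto dest: add_mset_subseteqD)
  with W(1) show ?thesis
    by (intro that[of W0]) (simp_all add: W_eq)
qed

lemma odd_walks_drop_or_join:
  assumes "symp E" and W: "odd_walks E W" "W \<noteq> {#}"
    and ends: "walk_ends W \<subseteq># add_mset p (add_mset q C)"
  obtains (drop) W0 where "odd_walks E W0" "size W = Suc (size W0)"
      "walk_odd_edges W0 \<subseteq># walk_odd_edges W" "walk_ends W0 \<subseteq># C"
    | (join) x M1 y M2 W1 where "odd_walk E x p M1" "odd_walk E q y M2" "odd_walks E W1"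
      "size W = Suc (Suc (size W1))" "walk_odd_edges W = M1 + M2 + walk_odd_edges W1"
      "add_mset x (add_mset y (walk_ends W1)) \<subseteq># C"
proof (cases "p \<in># walk_ends W")
  case False
  with ends have "walk_ends W \<subseteq># add_mset q C"
    by (rule subset_add_mset_notin)
  with assms(1) W obtain W0 where "odd_walks E W0" "size W = Suc (size W0)"
    "walk_odd_edges W0 \<subseteq># walk_odd_edges W" "walk_ends W0 \<subseteq># C"
    by (rule odd_walks_drop)
  then show ?thesis
    by (rule drop)
next
  case True
  with assms(1) W(1) obtain x M1 W0 where W0: "odd_walk E x p M1" "odd_walks E W0" "size W = Suc (size W0)"
      "walk_ends W = add_mset x (add_mset p (walk_ends W0))" "walk_odd_edges W = M1 + walk_odd_edges W0"
    by (rule odd_walk_ending_at)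
  from ends have ends0: "add_mset x (walk_ends W0) \<subseteq># add_mset q C"
    unfolding W0(4) add_mset_commute[of x p] by simp
  show ?thesis
  proof (cases "q \<in># walk_ends W0")
    case True
    with assms(1) W0(2) obtain y M2 W1 where W1: "odd_walk E y q M2" "odd_walks E W1"
      "size W0 = Suc (size W1)" "walk_ends W0 = add_mset y (add_mset q (walk_ends W1))"
      "walk_odd_edges W0 = M2 + walk_odd_edges W1"
      by (rule odd_walk_ending_at)
    from ends0 have "add_mset x (add_mset y (walk_ends W1)) \<subseteq># C"
      unfolding W1(4) add_mset_commute[of y q] add_mset_commute[of x q] by (simp add: add_mset_commute)
    moreover have "odd_walk E q y M2"
      using assms(1) W1(1) by (rule odd_walk_sym)
    ultimately show ?thesis
      using W0 W1 by (intro join[of x M1 y M2 W1]) (simp_all add: add.assoc)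
  next
    case False
    with add_mset_subseteqD[OF ends0] have "walk_ends W0 \<subseteq># C"
      by (rule subset_add_mset_notin)
    with W0 show ?thesis
      by (intro drop[of W0]) simp_all
  qed
qed

lemma odd_walks_merge:
  assumes "symp E"
  shows "size W = size R + 1 \<Longrightarrow> odd_walks E W \<Longrightarrow> \<forall>e\<in>#R. E (fst e) (snd e) \<Longrightarrow>
    walk_ends W \<subseteq># A + edge_vertices R \<Longrightarrow>
    \<exists>u v M. {#u, v#} \<subseteq># A \<and> odd_walk E u v M \<and> M \<subseteq># walk_odd_edges W + image_mset edge_set R"
proof (induction R arbitrary: W)
  case empty
  then have "size W = 1"
    by simp
  then obtain f where "W = {#f#}"
    by (blast dest: size_1_singleton_mset)
  moreover obtain x y M where "f = (x, y, M)"
    by (cases f)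
  ultimately have "W = {#(x, y, M)#}"
    by simp
  with empty show ?case
    by (intro exI[of _ x] exI[of _ y] exI[of _ M]) simp
next
  case (add e R)
  obtain p q where e: "e = (p, q)"
    by fastforce
  have IH: "\<exists>u v M. {#u, v#} \<subseteq># A \<and> odd_walk E u v M \<and> M \<subseteq># walk_odd_edges W + image_mset edge_set (add_mset e R)"
    if W': "size W' = size R + 1" "odd_walks E W'" "walk_ends W' \<subseteq># A + edge_vertices R"
      and odd_edges: "walk_odd_edges W' \<subseteq># add_mset {p, q} (walk_odd_edges W)" for W'
  proof -
    obtain u v M where uv: "{#u, v#} \<subseteq># A" "odd_walk E u v M"
      and M: "M \<subseteq># walk_odd_edges W' + image_mset edge_set R"
      using add.IH[OF W'(1,2) _ W'(3)] add.prems(3) by auto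
    have "walk_odd_edges W' + image_mset edge_set R \<subseteq># walk_odd_edges W + image_mset edge_set (add_mset e R)"
      using odd_edges by (simp add: e edge_set_def subset_mset.add_right_mono)
    with uv M show ?thesis
      using subset_mset.order_trans[OF M] by blast
  qed
  have nonempty: "W \<noteq> {#}"
    using add.prems(1) by auto
  have ends: "walk_ends W \<subseteq># add_mset p (add_mset q (A + edge_vertices R))"
    using add.prems(4) by (simp add: e)
  from assms add.prems(2) nonempty ends show ?case
  proof (cases rule: odd_walks_drop_or_join)
    case (drop W0)
    have "walk_odd_edges W0 \<subseteq># add_mset {p, q} (walk_odd_edges W)"
      by (rule add_mset_subseteqD[of "{p, q}"]) (simp add: drop(3))
    with drop add.prems(1) show ?thesis
      by (intro IH[of W0]) simp_all
  next
    case (join x M1 y M2 W1)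
    let ?W' = "add_mset (x, y, add_mset {p, q} (M1 + M2)) W1"
    have "odd_walk E x y (add_mset {p, q} (M1 + M2))"
      using join(1,2) add.prems(3) e by (intro odd_walk.join) auto
    moreover have "walk_odd_edges ?W' = add_mset {p, q} (walk_odd_edges W)"
      using join(5) by (simp add: add.assoc)
    ultimately show ?thesis
      using join(3,4,6) add.prems(1) by (intro IH[of ?W']) simp_all
  qed
qed

section \<open>The colon ideal\<close>

lemma sum_mset_mset_set_edge_set:
  "\<forall>e\<in>#R. fst e \<noteq> snd e \<Longrightarrow> (\<Sum>S\<in>#image_mset edge_set R. mset_set S) = edge_vertices R"
  by (induction R) (auto simp: edge_set_def)

lemma odd_walk_in_colon:
  assumes "irreflp E" and es: "\<And>e. e \<in> set es \<Longrightarrow> E (fst e) (snd e)"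
    and walk: "odd_walk E u v M" and M: "M \<subseteq># image_mset edge_set (mset es)"
  shows "(mon (pm_of_mset {#u, v#}) :: ('v, 'k::comm_ring_1) mpoly)
           \<in> colon (ideal_pow (edge_ideal E) (length es + 1)) (\<Prod>e\<leftarrow>es. var (fst e) * var (snd e))"
proof -
  obtain N where N: "size N = size M + 1" "\<forall>e\<in>#N. E (fst e) (snd e)"
    "edge_vertices N = {#u, v#} + (\<Sum>S\<in>#M. mset_set S)"
    using odd_walk_even_position_edges[OF assms(1) walk] by blast
  have "image_mset edge_set (mset es) = M + (image_mset edge_set (mset es) - M)"
    using M by simp
  then obtain R1 R2 where R: "mset es = R1 + R2" "M = image_mset edge_set R1"
    by (blast dest: image_mset_eq_plusD)
  have "\<forall>e\<in>#R1. fst e \<noteq> snd e"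
    using R(1) es irreflpD[OF assms(1)] by (metis union_iff set_mset_mset)
  then have "edge_vertices (N + R2) = {#u, v#} + edge_vertices (mset es)"
    using N(3) R by (simp add: sum_mset_mset_set_edge_set ac_simps)
  moreover have "\<forall>e\<in>#N + R2. E (fst e) (snd e)"
    using N(2) R(1) es by (metis union_iff set_mset_mset)
  moreover have "size (N + R2) = length es + 1"
    using N(1) R by (metis size_image_mset size_mset size_union add.commute add.left_commute)
  ultimately show ?thesis
    unfolding mon_in_colon_edges_iff pm_of_mset_add[symmetric]
    using edge_product_in_ideal_pow[of "N + R2" E] by (simp del: pm_of_mset_add)
qed

lemma exists_odd_walk_below:
  assumes "symp E" and es: "\<And>e. e \<in> set es \<Longrightarrow> E (fst e) (snd e)"
    and a: "(mon a :: ('v, 'k::comm_ring_1) mpoly)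
              \<in> colon (ideal_pow (edge_ideal E) (length es + 1)) (\<Prod>e\<leftarrow>es. var (fst e) * var (snd e))"
  shows "\<exists>u v M. {#u, v#} \<subseteq># mset_of_pm a \<and> odd_walk E u v M \<and> M \<subseteq># image_mset edge_set (mset es)"
proof -
  obtain L where L: "size L = length es + 1" "\<forall>e\<in>#L. E (fst e) (snd e)"
    "edge_vertices L \<subseteq># mset_of_pm a + edge_vertices (mset es)"
    using mon_in_edge_ideal_pow[OF a[unfolded mon_in_colon_edges_iff]] by auto
  define W where "W = image_mset (\<lambda>e. (fst e, snd e, {#} :: 'v set multiset)) L"
  have "odd_walks E W \<and> walk_ends W = edge_vertices L \<and> walk_odd_edges W = {#}"
    unfolding W_def using L(2) by (induction L) (auto intro: odd_walk.edge)
  moreover have "size W = size (mset es) + 1"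
    using L(1) by (simp add: W_def)
  ultimately show ?thesis
    using odd_walks_merge[OF assms(1), of W "mset es" "mset_of_pm a"] es L(3) by auto
qed

theorem theorem6p7:
  fixes E :: "'v::finite \<Rightarrow> 'v \<Rightarrow> bool"
    and es :: "('v \<times> 'v) list"
    and a :: "'v \<Rightarrow>\<^sub>0 nat"
  assumes sym: "\<And>x y. E x y \<Longrightarrow> E y x"
    and irrefl: "\<And>x. \<not> E x x"
    and s_pos: "length es \<ge> 1"
    and es_edges: "\<And>e. e \<in> set es \<Longrightarrow> E (fst e) (snd e)"
    and gen: "a \<in> min_mon_gens
        (colon (ideal_pow (edge_ideal E :: ('v, 'k::field) mpoly set) (length es + 1))
               (\<Prod>e\<leftarrow>es. var (fst e) * var (snd e)))"
  shows "\<exists>u v. a = Poly_Mapping.single u 1 + Poly_Mapping.single v 1 \<and>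
               (E u v \<or> even_connected E es u v)"
proof -
  have "symp E" "irreflp E"
    using sym irrefl by (auto intro: sympI irreflpI)
  let ?J = "colon (ideal_pow (edge_ideal E :: ('v, 'k) mpoly set) (length es + 1))
               (\<Prod>e\<leftarrow>es. var (fst e) * var (snd e))"
  from gen have a: "mon a \<in> ?J" and minimal: "\<And>b. mon b dvd (mon a :: ('v, 'k) mpoly) \<Longrightarrow> mon b \<in> ?J \<Longrightarrow> b = a"
    unfolding min_mon_gens_def by blast+
  obtain u v M where uv: "{#u, v#} \<subseteq># mset_of_pm a"
    and walk: "odd_walk E u v M" and M: "M \<subseteq># image_mset edge_set (mset es)"
    using exists_odd_walk_below[OF \<open>symp E\<close> es_edges a] by blast
  have "pm_of_mset {#u, v#} = a"
    using minimal[OF mon_dvd_mon[OF uv] odd_walk_in_colon[OF \<open>irreflp E\<close> es_edges walk M]] .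
  moreover have "E u v \<or> even_connected E es u v"
    using walk M by (rule odd_walk_even_connected)
  ultimately show ?thesis
    by (auto simp: pm_of_mset_def)
qed

end
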